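(* Let $G_1,\dots,G_n$ be rooted graphs and let $G$ be the decorated path obtained from them, with path vertices $1,\dots,n$. If $\theta$ is a real number larger than the largest pole of $\alpha_1^G$, then for every $i\in\{1,\dots,n\}$ and every real $\lambda\ge\theta$, $\lambda$ is not a pole of $\alpha_i^{G_i}$.
   Context: Graphs are finite and simple. For a graph $H$, $\phi^H$ is the characteristic polynomial of its adjacency matrix, and for a vertex $i$, $\alpha_i^H=\phi^H/\phi^{H\setminus i}$ (rational function in $x$). A rooted graph is a graph with a distinguished root. The decorated path built from pairwise disjoint rooted graphs $G_1,\dots,G_n$ is obtained from the path on vertices $1,\dots,n$ ($i\sim i+1$) by identifying the root of $G_i$ with vertex $i$; $\alpha_i^{G_i}$ is taken at this root. *)

theory Defs
  imports "HOL-Combinatorics.Permutations" "HOL-Computational_Algebra.Polynomial"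
begin

definition simple_graph :: "'a set \<Rightarrow> ('a \<Rightarrow> 'a \<Rightarrow> bool) \<Rightarrow> bool" where
  "simple_graph V E \<longleftrightarrow> finite V \<and> (\<forall>u v. E u v \<longrightarrow> u \<in> V \<and> v \<in> V)
     \<and> (\<forall>u v. E u v \<longrightarrow> E v u) \<and> (\<forall>u. \<not> E u u)"

definition rooted_graph :: "'a set \<Rightarrow> ('a \<Rightarrow> 'a \<Rightarrow> bool) \<Rightarrow> 'a \<Rightarrow> bool" where
  "rooted_graph V E r \<longleftrightarrow> simple_graph V E \<and> r \<in> V"

definition adj :: "('a \<Rightarrow> 'a \<Rightarrow> bool) \<Rightarrow> 'a \<Rightarrow> 'a \<Rightarrow> real" where
  "adj E u v = (if E u v then 1 else 0)"

definition charpoly :: "'a set \<Rightarrow> ('a \<Rightarrow> 'a \<Rightarrow> bool) \<Rightarrow> real poly" where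
  "charpoly V E = (\<Sum>p | p permutes V. of_int (sign p) *
      (\<Prod>v\<in>V. (if p v = v then [:0, 1:] else 0) - [:adj E v (p v):]))"

text \<open>mu is a pole of the rational function p/q (orders of vanishing compared, i.e.
  after cancelling common factors the denominator vanishes at mu).\<close>
definition rat_pole :: "real poly \<Rightarrow> real poly \<Rightarrow> real \<Rightarrow> bool" where
  "rat_pole p q mu \<longleftrightarrow> p \<noteq> 0 \<and> q \<noteq> 0 \<and> order mu p < order mu q"

text \<open>mu is a pole of alpha_i^H = phi^H / phi^(H minus i).\<close>
definition alpha_pole :: "'a set \<Rightarrow> ('a \<Rightarrow> 'a \<Rightarrow> bool) \<Rightarrow> 'a \<Rightarrow> real \<Rightarrow> bool" where
  "alpha_pole V E i mu \<longleftrightarrow> rat_pole (charpoly V E) (charpoly (V - {i}) E) mu"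

text \<open>Decorated path from rooted graphs (V i, E i, r i), i = 1..n: the root r i plays
  the role of path vertex i, and r i ~ r (i+1) for 1 <= i < n.\<close>
definition dpath_V :: "nat \<Rightarrow> (nat \<Rightarrow> 'a set) \<Rightarrow> 'a set" where
  "dpath_V n V = (\<Union>i\<in>{1..n}. V i)"

definition dpath_E :: "nat \<Rightarrow> (nat \<Rightarrow> 'a \<Rightarrow> 'a \<Rightarrow> bool) \<Rightarrow> (nat \<Rightarrow> 'a) \<Rightarrow> 'a \<Rightarrow> 'a \<Rightarrow> bool" where
  "dpath_E n E r u v \<longleftrightarrow> (\<exists>i\<in>{1..n}. E i u v)
     \<or> (\<exists>i. 1 \<le> i \<and> i < n \<and> ((u = r i \<and> v = r (Suc i)) \<or> (u = r (Suc i) \<and> v = r i)))"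

end

(*
  Let phi_H be the characteristic polynomial of H. For a vertex v, phi_(H - v) / phi_H is the
  (v, v) entry of the resolvent (x I - A)^-1, whose derivative is minus the sum of the squares of
  the entries in column v. Hence alpha_v^H = phi_H / phi_(H - v) has slope at least 1 wherever it
  is finite: it tends to +infinity to the left of each pole, to -infinity to the right of it, and
  it has a zero beyond its largest pole.

  Joining G_1 by the edge r_1 r_2 to the decorated path G' on G_2, ..., G_n gives
  alpha_1^G = alpha_1^(G_1) - 1 / alpha_2^(G'), and both summands tend to +infinity from the left
  at a pole of alpha_1^(G_1), resp. at a zero of alpha_2^(G'); so both are poles of alpha_1^G.
  By induction along the path, a pole lam of alpha_i^(G_i) gives a pole of alpha_2^(G') that is at
  least lam, hence a larger zero of alpha_2^(G'), hence a pole of alpha_1^G above lam.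
*)

theory Submission
  imports Defs "Jordan_Normal_Form.Char_Poly" "HOL-Computational_Algebra.Field_as_Ring"
begin

section \<open>Determinants indexed by finite sets\<close>

definition det_on :: "'a set \<Rightarrow> ('a \<Rightarrow> 'a \<Rightarrow> 'r::comm_ring_1) \<Rightarrow> 'r" where
  "det_on S M = (\<Sum>p | p permutes S. of_int (sign p) * (\<Prod>u\<in>S. M u (p u)))"

lemma det_on_cong:
  assumes "\<And>u w. u \<in> S \<Longrightarrow> w \<in> S \<Longrightarrow> M u w = M' u w"
  shows "det_on S M = det_on S M'"
  unfolding det_on_def using assms by (intro sum.cong refl) (auto intro!: prod.cong simp: permutes_in_image)

lemma det_on_eq_det:
  fixes M :: "'a \<Rightarrow> 'a \<Rightarrow> 'r::comm_ring_1"
  assumes g: "bij_betw g {0..<m} S"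
  shows "det_on S M = det (mat m m (\<lambda>(i,j). M (g i) (g j)))"
proof -
  have inj: "inj_on g {0..<m}" using g by (simp add: bij_betw_def)
  let ?h = "map_permutation {0..<m} g"
  have "?h = (\<lambda>\<pi> x. if x \<in> S then g (\<pi> (inv_into {0..<m} g x)) else x)"
    using g by (auto simp: fun_eq_iff map_permutation_def restrict_id_def bij_betw_def)
  then have bij: "bij_betw ?h {q. q permutes {0..<m}} {p. p permutes S}"
    using bij_betw_permutations[OF g] by simp
  have term_eq: "of_int (sign (?h q)) * (\<Prod>u\<in>S. M u (?h q u))
      = signof q * (\<Prod>i=0..<m. mat m m (\<lambda>(i,j). M (g i) (g j)) $$ (i, q i))"
    if q: "q permutes {0..<m}" for q
  proof -
    have "(\<Prod>u\<in>S. M u (?h q u)) = (\<Prod>i\<in>{0..<m}. M (g i) (?h q (g i)))"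
      by (rule prod.reindex_bij_betw[OF g, symmetric])
    also have "\<dots> = (\<Prod>i=0..<m. mat m m (\<lambda>(i,j). M (g i) (g j)) $$ (i, q i))"
      using q by (intro prod.cong refl) (auto simp: map_permutation_apply[OF inj] permutes_in_image)
    finally show ?thesis
      using sign_map_permutation[OF inj q] by simp
  qed
  have "det_on S M = (\<Sum>q | q permutes {0..<m}. of_int (sign (?h q)) * (\<Prod>u\<in>S. M u (?h q u)))"
    unfolding det_on_def by (rule sum.reindex_bij_betw[OF bij, symmetric])
  also have "\<dots> = (\<Sum>q | q permutes {0..<m}. signof q * (\<Prod>i=0..<m. mat m m (\<lambda>(i,j). M (g i) (g j)) $$ (i, q i)))"
    using term_eq by (intro sum.cong) auto
  also have "\<dots> = det (mat m m (\<lambda>(i,j). M (g i) (g j)))"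
    by (rule det_def'[symmetric]) simp
  finally show ?thesis .
qed

lemma permutes_stable_restrict_id:
  assumes disj: "V1 \<inter> V2 = {}" and p: "p permutes V1 \<union> V2" "p ` V1 = V1"
  shows "restrict_id p V1 permutes V1" "restrict_id p V2 permutes V2"
    and "restrict_id p V1 \<circ> restrict_id p V2 = p"
proof -
  have inj: "inj_on p (V1 \<union> V2)" using p(1) by (simp add: permutes_inj_on)
  have "p ` V2 = V2"
  proof -
    have "p ` V1 \<union> p ` V2 = V1 \<union> V2" using permutes_image[OF p(1)] by (simp add: image_Un)
    moreover have "p ` V1 \<inter> p ` V2 = {}"
      using inj_on_image_Int[OF inj, of V1 V2] disj by auto
    ultimately show ?thesis using p(2) disj by auto
  qed
  then have "bij_betw p V1 V1" "bij_betw p V2 V2"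
    using p(2) inj by (auto simp: bij_betw_def intro: inj_on_subset)
  then show "restrict_id p V1 permutes V1" "restrict_id p V2 permutes V2"
    by (simp_all add: permutes_restrict_id)
  show "restrict_id p V1 \<circ> restrict_id p V2 = p"
    using \<open>p ` V2 = V2\<close> p disj by (auto simp: fun_eq_iff restrict_id_def permutes_not_in)
qed

lemma permutes_compose_disjoint_bij:
  assumes disj: "V1 \<inter> V2 = {}"
  shows "bij_betw (\<lambda>(p1, p2). p1 \<circ> p2) ({p. p permutes V1} \<times> {p. p permutes V2})
           {p. p permutes (V1 \<union> V2) \<and> p ` V1 = V1}"
proof (rule bij_betw_byWitness[where f' = "\<lambda>p. (restrict_id p V1, restrict_id p V2)"])
  have fix1: "p2 x = x" if "p2 permutes V2" "x \<in> V1" for p2 x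
    using that disj by (meson disjoint_iff permutes_not_in)
  have "restrict_id (p1 \<circ> p2) V1 = p1 \<and> restrict_id (p1 \<circ> p2) V2 = p2"
    if p1: "p1 permutes V1" and p2: "p2 permutes V2" for p1 p2
  proof -
    have "p2 x \<notin> V1" if "x \<in> V2" for x using that p2 disj by (auto simp: permutes_in_image)
    then show ?thesis
      using fix1[OF p2] p1 p2 by (auto simp: fun_eq_iff restrict_id_def permutes_not_in)
  qed
  then show "\<forall>a\<in>{p. p permutes V1} \<times> {p. p permutes V2}.
      (restrict_id ((\<lambda>(p1, p2). p1 \<circ> p2) a) V1, restrict_id ((\<lambda>(p1, p2). p1 \<circ> p2) a) V2) = a"
    by auto
  show "(\<lambda>(p1, p2). p1 \<circ> p2) ` ({p. p permutes V1} \<times> {p. p permutes V2})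
      \<subseteq> {p. p permutes (V1 \<union> V2) \<and> p ` V1 = V1}"
  proof clarify
    fix p1 p2 assume p1: "p1 permutes V1" and p2: "p2 permutes V2"
    have "p1 \<circ> p2 permutes V1 \<union> V2"
      using p1 p2 by (meson permutes_compose permutes_subset sup.cobounded1 sup.cobounded2)
    moreover have "p2 ` V1 = V1" using fix1[OF p2] by simp
    then have "(p1 \<circ> p2) ` V1 = V1" using p1 by (metis image_comp permutes_image)
    ultimately show "p1 \<circ> p2 permutes V1 \<union> V2 \<and> (p1 \<circ> p2) ` V1 = V1" by simp
  qed
  show "(\<lambda>p. (restrict_id p V1, restrict_id p V2)) ` {p. p permutes (V1 \<union> V2) \<and> p ` V1 = V1}
      \<subseteq> {p. p permutes V1} \<times> {p. p permutes V2}"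
    using permutes_stable_restrict_id[OF disj] by auto
  show "\<forall>p\<in>{p. p permutes (V1 \<union> V2) \<and> p ` V1 = V1}.
      (\<lambda>(p1, p2). p1 \<circ> p2) (restrict_id p V1, restrict_id p V2) = p"
    using permutes_stable_restrict_id(3)[OF disj] by auto
qed

lemma sum_stable_permutations_eq_det_on_mult:
  fixes M :: "'a \<Rightarrow> 'a \<Rightarrow> 'r::comm_ring_1"
  assumes fin: "finite V1" "finite V2" and disj: "V1 \<inter> V2 = {}"
  shows "(\<Sum>p | p permutes (V1 \<union> V2) \<and> p ` V1 = V1. of_int (sign p) * (\<Prod>u\<in>V1 \<union> V2. M u (p u)))
         = det_on V1 M * det_on V2 M"
proof -
  let ?f = "\<lambda>S p. of_int (sign p) * (\<Prod>u\<in>S. M u (p u)) :: 'r"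
  have compose_term: "?f V1 p1 * ?f V2 p2 = ?f (V1 \<union> V2) (p1 \<circ> p2)"
    if p1: "p1 permutes V1" and p2: "p2 permutes V2" for p1 p2
  proof -
    have "(p1 \<circ> p2) u = p1 u" if "u \<in> V1" for u
      using that disj permutes_not_in[OF p2, of u] by (auto simp: disjoint_iff)
    moreover have "(p1 \<circ> p2) u = p2 u" if "u \<in> V2" for u
      using that disj permutes_in_image[OF p2, of u] permutes_not_in[OF p1, of "p2 u"] by auto
    moreover have "sign (p1 \<circ> p2) = sign p1 * sign p2"
      using sign_compose permutes_imp_permutation fin p1 p2 by blast
    ultimately show ?thesis
      using fin disj by (simp add: prod.union_disjoint algebra_simps cong: prod.cong)
  qed
  have "det_on V1 M * det_on V2 M
      = (\<Sum>x\<in>{p. p permutes V1} \<times> {p. p permutes V2}. ?f (V1 \<union> V2) ((\<lambda>(p1, p2). p1 \<circ> p2) x))"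
    unfolding det_on_def sum_product sum.cartesian_product
    by (intro sum.cong refl) (auto simp: compose_term)
  also have "\<dots> = (\<Sum>p | p permutes (V1 \<union> V2) \<and> p ` V1 = V1. ?f (V1 \<union> V2) p)"
    by (rule sum.reindex_bij_betw[OF permutes_compose_disjoint_bij[OF disj]])
  finally show ?thesis by simp
qed

lemma det_on_block_triangular:
  fixes M :: "'a \<Rightarrow> 'a \<Rightarrow> 'r::comm_ring_1"
  assumes fin: "finite V1" "finite V2" and disj: "V1 \<inter> V2 = {}"
    and cross: "\<And>u w. u \<in> V1 \<Longrightarrow> w \<in> V2 \<Longrightarrow> M u w = 0"
  shows "det_on (V1 \<union> V2) M = det_on V1 M * det_on V2 M"
proof -
  let ?f = "\<lambda>p. of_int (sign p) * (\<Prod>u\<in>V1 \<union> V2. M u (p u)) :: 'r"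
  have "det_on (V1 \<union> V2) M = sum ?f {p. p permutes V1 \<union> V2 \<and> p ` V1 = V1}"
    unfolding det_on_def
  proof (rule sum.mono_neutral_right)
    show "finite {p. p permutes V1 \<union> V2}" using fin by (simp add: finite_permutations)
    show "{p. p permutes V1 \<union> V2 \<and> p ` V1 = V1} \<subseteq> {p. p permutes V1 \<union> V2}" by blast
    show "\<forall>p\<in>{p. p permutes V1 \<union> V2} - {p. p permutes V1 \<union> V2 \<and> p ` V1 = V1}. ?f p = 0"
    proof
      fix p assume "p \<in> {p. p permutes V1 \<union> V2} - {p. p permutes V1 \<union> V2 \<and> p ` V1 = V1}"
      then have p: "p permutes V1 \<union> V2" "p ` V1 \<noteq> V1" by auto
      have "\<not> p ` V1 \<subseteq> V1"
        using p endo_inj_surj[OF fin(1)] inj_on_subset[OF permutes_inj_on[OF p(1)]] by blast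
      then obtain u where "u \<in> V1" "p u \<notin> V1" by blast
      moreover have "p u \<in> V1 \<union> V2" using permutes_in_image[OF p(1)] \<open>u \<in> V1\<close> by blast
      ultimately have "\<exists>u\<in>V1 \<union> V2. M u (p u) = 0" using cross by blast
      then show "?f p = 0" using fin by (simp add: prod_zero)
    qed
  qed
  also have "\<dots> = det_on V1 M * det_on V2 M"
    by (rule sum_stable_permutations_eq_det_on_mult[OF fin disj])
  finally show ?thesis .
qed

lemma permutes_bridge_cases:
  fixes M :: "'a \<Rightarrow> 'a \<Rightarrow> 'r::comm_ring_1"
  assumes fin: "finite V1" "finite V2" and disj: "V1 \<inter> V2 = {}" and a: "a \<in> V1" and b: "b \<in> V2"
    and cross12: "\<And>u w. u \<in> V1 \<Longrightarrow> w \<in> V2 \<Longrightarrow> (u, w) \<noteq> (a, b) \<Longrightarrow> M u w = 0"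
    and cross21: "\<And>u w. u \<in> V2 \<Longrightarrow> w \<in> V1 \<Longrightarrow> (u, w) \<noteq> (b, a) \<Longrightarrow> M u w = 0"
    and p: "p permutes V1 \<union> V2" and nz: "\<And>u. u \<in> V1 \<union> V2 \<Longrightarrow> M u (p u) \<noteq> 0"
  shows "p ` V1 = V1 \<or> (p a = b \<and> p b = a \<and> p ` (V1 - {a}) = V1 - {a})"
proof -
  have inj: "inj_on p (V1 \<union> V2)" using p by (rule permutes_inj_on)
  have into: "p u \<in> V1 \<union> V2" if "u \<in> V1 \<union> V2" for u using permutes_in_image[OF p] that by blast
  have stay1: "p u \<in> V1" if "u \<in> V1" "u \<noteq> a" for u
    using into[of u] cross12[of u "p u"] nz[of u] that by auto
  have stay2: "p u \<in> V2" if "u \<in> V2" "u \<noteq> b" for u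
    using into[of u] cross21[of u "p u"] nz[of u] that by auto
  have onto: "p ` A = A" if "A \<subseteq> V1 \<union> V2" "finite A" "p ` A \<subseteq> A" for A
    using endo_inj_surj[OF that(2,3)] inj_on_subset[OF inj that(1)] by simp
  show ?thesis
  proof (cases "p a \<in> V1")
    case True
    then have "p ` V1 \<subseteq> V1" using stay1 by blast
    then show ?thesis using onto[of V1] fin by blast
  next
    case False
    then have pa: "p a = b" using into[of a] cross12[of a "p a"] nz[of a] a by auto
    have "p b \<in> V1"
    proof (rule ccontr)
      assume "p b \<notin> V1"
      then have "p ` V2 \<subseteq> V2" using stay2 into[of b] b by blast
      then have "b \<in> p ` V2" using onto[of V2] fin b by blast
      then obtain w where "w \<in> V2" "p w = p a" using pa by auto
      then show False using inj a disj unfolding inj_on_def by blast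
    qed
    then have pb: "p b = a" using cross21[of b "p b"] nz[of b] b by auto
    have stay1': "p u \<in> V1 - {a}" if u: "u \<in> V1" "u \<noteq> a" for u
    proof -
      have "p u \<noteq> p b" using inj u b disj unfolding inj_on_def by blast
      then show ?thesis using stay1[OF u] pb by simp
    qed
    then have "p ` (V1 - {a}) \<subseteq> V1 - {a}" by (intro image_subsetI) simp
    then have "p ` (V1 - {a}) = V1 - {a}" using onto[of "V1 - {a}"] fin by blast
    then show ?thesis using pa pb by simp
  qed
qed

lemma transpose_compose_bij:
  assumes disj: "V1 \<inter> V2 = {}" and a: "a \<in> V1" and b: "b \<in> V2"
  shows "bij_betw (\<lambda>q. transpose a b \<circ> q)
           {q. q permutes (V1 - {a}) \<union> (V2 - {b}) \<and> q ` (V1 - {a}) = V1 - {a}}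
           {p. p permutes V1 \<union> V2 \<and> p a = b \<and> p b = a \<and> p ` (V1 - {a}) = V1 - {a}}"
proof (rule bij_betw_byWitness[where f' = "\<lambda>q. transpose a b \<circ> q"])
  have S: "(V1 - {a}) \<union> (V2 - {b}) = (V1 \<union> V2) - {a, b}" using a b disj by auto
  have t: "transpose a b permutes V1 \<union> V2" using a b by (simp add: permutes_swap_id)
  have t_fix: "transpose a b ` (V1 - {a}) = V1 - {a}"
    using b disj by (intro image_cong[where g = id, simplified]) (auto simp: transpose_def)
  show "\<forall>q\<in>{q. q permutes (V1 - {a}) \<union> (V2 - {b}) \<and> q ` (V1 - {a}) = V1 - {a}}.
      transpose a b \<circ> (transpose a b \<circ> q) = q"
    "\<forall>p\<in>{p. p permutes V1 \<union> V2 \<and> p a = b \<and> p b = a \<and> p ` (V1 - {a}) = V1 - {a}}.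
      transpose a b \<circ> (transpose a b \<circ> p) = p"
    by (simp_all add: fun_eq_iff)
  show "(\<lambda>q. transpose a b \<circ> q) ` {q. q permutes (V1 - {a}) \<union> (V2 - {b}) \<and> q ` (V1 - {a}) = V1 - {a}}
      \<subseteq> {p. p permutes V1 \<union> V2 \<and> p a = b \<and> p b = a \<and> p ` (V1 - {a}) = V1 - {a}}"
  proof (rule image_subsetI)
    fix q assume "q \<in> {q. q permutes (V1 - {a}) \<union> (V2 - {b}) \<and> q ` (V1 - {a}) = V1 - {a}}"
    then have q: "q permutes (V1 - {a}) \<union> (V2 - {b})" "q ` (V1 - {a}) = V1 - {a}" by simp_all
    have "q permutes V1 \<union> V2" using q(1) by (rule permutes_subset) blast
    then have "transpose a b \<circ> q permutes V1 \<union> V2" using t by (rule permutes_compose)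
    moreover have "q a = a" "q b = b" using q(1) S by (auto simp: permutes_not_in)
    moreover have "(transpose a b \<circ> q) ` (V1 - {a}) = V1 - {a}"
      using q(2) t_fix by (metis image_comp)
    ultimately show "transpose a b \<circ> q \<in> {p. p permutes V1 \<union> V2 \<and> p a = b \<and> p b = a
        \<and> p ` (V1 - {a}) = V1 - {a}}"
      by simp
  qed
  show "(\<lambda>q. transpose a b \<circ> q) ` {p. p permutes V1 \<union> V2 \<and> p a = b \<and> p b = a \<and> p ` (V1 - {a}) = V1 - {a}}
      \<subseteq> {q. q permutes (V1 - {a}) \<union> (V2 - {b}) \<and> q ` (V1 - {a}) = V1 - {a}}"
  proof (rule image_subsetI)
    fix p assume "p \<in> {p. p permutes V1 \<union> V2 \<and> p a = b \<and> p b = a \<and> p ` (V1 - {a}) = V1 - {a}}"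
    then have p: "p permutes V1 \<union> V2" "p a = b" "p b = a" "p ` (V1 - {a}) = V1 - {a}" by simp_all
    have "transpose a b \<circ> p permutes V1 \<union> V2" using p(1) t by (rule permutes_compose)
    then have "transpose a b \<circ> p permutes (V1 - {a}) \<union> (V2 - {b})"
      unfolding S permutes_def using p(2,3) by auto
    moreover have "(transpose a b \<circ> p) ` (V1 - {a}) = V1 - {a}"
      using p(4) t_fix by (metis image_comp)
    ultimately show "transpose a b \<circ> p \<in> {q. q permutes (V1 - {a}) \<union> (V2 - {b})
        \<and> q ` (V1 - {a}) = V1 - {a}}"
      by simp
  qed
qed

lemma sum_bridge_swapping_permutations:
  fixes M :: "'a \<Rightarrow> 'a \<Rightarrow> 'r::comm_ring_1"
  assumes fin: "finite V1" "finite V2" and disj: "V1 \<inter> V2 = {}" and a: "a \<in> V1" and b: "b \<in> V2"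
  shows "(\<Sum>p | p permutes V1 \<union> V2 \<and> p a = b \<and> p b = a \<and> p ` (V1 - {a}) = V1 - {a}.
            of_int (sign p) * (\<Prod>u\<in>V1 \<union> V2. M u (p u)))
    = - (M a b * M b a * (det_on (V1 - {a}) M * det_on (V2 - {b}) M))"
proof -
  let ?f = "\<lambda>S p. of_int (sign p) * (\<Prod>u\<in>S. M u (p u)) :: 'r"
  let ?S = "V1 \<union> V2" and ?S' = "(V1 - {a}) \<union> (V2 - {b})"
  let ?T' = "{q. q permutes ?S' \<and> q ` (V1 - {a}) = V1 - {a}}"
  have S': "?S = insert a (insert b ?S')" "a \<notin> ?S'" "b \<notin> ?S'" and ab: "a \<noteq> b"
    using a b disj by auto
  have term_eq: "?f ?S (transpose a b \<circ> q) = - (M a b * M b a * ?f ?S' q)" if q: "q \<in> ?T'" for q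
  proof -
    have q': "q permutes ?S'" using q by simp
    have qab: "q a = a" "q b = b" using permutes_not_in[OF q'] S'(2,3) by blast+
    have "sign (transpose a b \<circ> q) = - sign q"
      using sign_compose[OF permutation_swap_id permutes_imp_permutation[OF _ q'], of a b] fin ab
      by (simp add: sign_swap_id)
    moreover have "(\<Prod>u\<in>?S'. M u ((transpose a b \<circ> q) u)) = (\<Prod>u\<in>?S'. M u (q u))"
    proof (rule prod.cong[OF refl])
      fix u assume "u \<in> ?S'"
      then have "q u \<in> ?S'" using permutes_in_image[OF q'] by blast
      then show "M u ((transpose a b \<circ> q) u) = M u (q u)" using S'(2,3) by (auto simp: transpose_def)
    qed
    moreover have "(\<Prod>u\<in>?S. M u ((transpose a b \<circ> q) u))
        = M a b * (M b a * (\<Prod>u\<in>?S'. M u ((transpose a b \<circ> q) u)))"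
      unfolding S'(1) using fin S'(2,3) qab ab by simp
    ultimately show ?thesis by (simp add: algebra_simps)
  qed
  have "(\<Sum>p | p permutes ?S \<and> p a = b \<and> p b = a \<and> p ` (V1 - {a}) = V1 - {a}. ?f ?S p)
      = (\<Sum>q\<in>?T'. ?f ?S (transpose a b \<circ> q))"
    by (rule sum.reindex_bij_betw[OF transpose_compose_bij[OF disj a b], symmetric])
  also have "\<dots> = - (M a b * M b a * sum (?f ?S') ?T')"
    using term_eq by (simp add: sum_negf sum_distrib_left)
  also have "sum (?f ?S') ?T' = det_on (V1 - {a}) M * det_on (V2 - {b}) M"
    using fin disj by (intro sum_stable_permutations_eq_det_on_mult) auto
  finally show ?thesis .
qed

lemma det_on_bridge:
  fixes M :: "'a \<Rightarrow> 'a \<Rightarrow> 'r::comm_ring_1"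
  assumes fin: "finite V1" "finite V2" and disj: "V1 \<inter> V2 = {}" and a: "a \<in> V1" and b: "b \<in> V2"
    and cross12: "\<And>u w. u \<in> V1 \<Longrightarrow> w \<in> V2 \<Longrightarrow> (u, w) \<noteq> (a, b) \<Longrightarrow> M u w = 0"
    and cross21: "\<And>u w. u \<in> V2 \<Longrightarrow> w \<in> V1 \<Longrightarrow> (u, w) \<noteq> (b, a) \<Longrightarrow> M u w = 0"
  shows "det_on (V1 \<union> V2) M
    = det_on V1 M * det_on V2 M - M a b * M b a * det_on (V1 - {a}) M * det_on (V2 - {b}) M"
proof -
  let ?S = "V1 \<union> V2"
  let ?f = "\<lambda>p. of_int (sign p) * (\<Prod>u\<in>?S. M u (p u)) :: 'r"
  define T where "T = {p. p permutes ?S \<and> p ` V1 = V1}"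
  define B where "B = {p. p permutes ?S \<and> p a = b \<and> p b = a \<and> p ` (V1 - {a}) = V1 - {a}}"
  have finS: "finite ?S" using fin by simp
  have support: "p \<in> T \<union> B" if "p permutes ?S" "\<And>u. u \<in> ?S \<Longrightarrow> M u (p u) \<noteq> 0" for p
    using permutes_bridge_cases[where M = M, OF fin disj a b cross12 cross21 that] that(1)
    unfolding T_def B_def by blast
  have "det_on ?S M = sum ?f (T \<union> B)"
    unfolding det_on_def
  proof (rule sum.mono_neutral_right)
    show "finite {p. p permutes ?S}" using finS by (rule finite_permutations)
    show "T \<union> B \<subseteq> {p. p permutes ?S}" unfolding T_def B_def by blast
    show "\<forall>p\<in>{p. p permutes ?S} - (T \<union> B). ?f p = 0"
    proof
      fix p assume "p \<in> {p. p permutes ?S} - (T \<union> B)"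
      then have "\<exists>u\<in>?S. M u (p u) = 0" using support by blast
      then show "?f p = 0" using finS by (simp add: prod_zero)
    qed
  qed
  also have "\<dots> = sum ?f T + sum ?f B"
  proof (rule sum.union_disjoint)
    show "finite T" "finite B"
      using finite_permutations[OF finS] unfolding T_def B_def by (auto intro: finite_subset)
    show "T \<inter> B = {}" using a b disj unfolding T_def B_def by blast
  qed
  also have "sum ?f T = det_on V1 M * det_on V2 M"
    unfolding T_def by (rule sum_stable_permutations_eq_det_on_mult[OF fin disj])
  also have "sum ?f B = - (M a b * M b a * (det_on (V1 - {a}) M * det_on (V2 - {b}) M))"
    unfolding B_def by (rule sum_bridge_swapping_permutations[OF fin disj a b])
  finally show ?thesis by (simp add: algebra_simps)
qed

section \<open>Rational functions of slope at least one\<close>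

lemma eventually_poly_nonzero:
  fixes p :: "real poly"
  assumes "p \<noteq> 0"
  shows "eventually (\<lambda>y. poly p y \<noteq> 0) (at x)"
proof -
  have "eventually (\<lambda>y. \<forall>z\<in>{z. poly p z = 0}. y \<noteq> z) (at x)"
    using poly_roots_finite[OF assms] by (rule eventually_ball_finite) (simp add: eventually_neq_at_within)
  then show ?thesis by (rule eventually_mono) auto
qed

lemma poly_nonneg_if_nonneg_off_roots:
  fixes g D :: "real poly"
  assumes "D \<noteq> 0" "\<And>y. poly D y \<noteq> 0 \<Longrightarrow> 0 \<le> poly g y"
  shows "0 \<le> poly g x"
proof (rule tendsto_lowerbound)
  show "(poly g \<longlongrightarrow> poly g x) (at x)"
    by (rule isCont_tendsto_compose[where g = "poly g", OF poly_isCont tendsto_ident_at])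
  show "eventually (\<lambda>y. 0 \<le> poly g y) (at x)"
    using eventually_poly_nonzero[OF assms(1)] by (rule eventually_mono) (use assms(2) in auto)
qed simp

(* As (p/q)' = (p'q - pq')/q^2, the quotient p/q has slope at least 1 wherever q does not vanish. *)
definition steep_quotient :: "real poly \<Rightarrow> real poly \<Rightarrow> bool" where
  "steep_quotient p q \<longleftrightarrow> (\<forall>x. (poly q x)\<^sup>2 \<le> poly (pderiv p * q - p * pderiv q) x)"

lemma rat_pole_common_factor_iff:
  fixes D p q :: "real poly"
  assumes "D \<noteq> 0" "p \<noteq> 0" "q \<noteq> 0" "coprime p q"
  shows "rat_pole (D * p) (D * q) \<mu> \<longleftrightarrow> poly q \<mu> = 0"
proof -
  have "rat_pole (D * p) (D * q) \<mu> \<longleftrightarrow> order \<mu> p < order \<mu> q"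
    using assms by (simp add: rat_pole_def order_mult)
  also have "\<dots> \<longleftrightarrow> poly q \<mu> = 0"
    using coprime_poly_0[OF assms(4), of \<mu>] assms(2,3) by (auto simp: order_root order_0I)
  finally show ?thesis .
qed

lemma common_factor_coprimeE:
  fixes P Q :: "real poly"
  assumes "P \<noteq> 0" "Q \<noteq> 0"
  obtains D p q where "P = D * p" "Q = D * q" "D \<noteq> 0" "p \<noteq> 0" "q \<noteq> 0" "coprime p q"
proof
  show P: "P = gcd P Q * (P div gcd P Q)" and Q: "Q = gcd P Q * (Q div gcd P Q)" by simp_all
  show "gcd P Q \<noteq> 0" using assms by simp
  show "P div gcd P Q \<noteq> 0" using P assms(1) by (metis mult_zero_right)
  show "Q div gcd P Q \<noteq> 0" using Q assms(2) by (metis mult_zero_right)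
  show "coprime (P div gcd P Q) (Q div gcd P Q)"
    using assms by (intro div_gcd_coprime) simp
qed

lemma steep_quotient_cancel_common_factor:
  fixes D p q :: "real poly"
  assumes "D \<noteq> 0" "steep_quotient (D * p) (D * q)"
  shows "steep_quotient p q"
  unfolding steep_quotient_def
proof
  fix x
  have "0 \<le> poly (pderiv p * q - p * pderiv q - q\<^sup>2) x"
  proof (rule poly_nonneg_if_nonneg_off_roots[OF assms(1)])
    fix y assume Dy: "poly D y \<noteq> 0"
    have "(poly D y)\<^sup>2 * (poly q y)\<^sup>2 \<le> (poly D y)\<^sup>2 * poly (pderiv p * q - p * pderiv q) y"
      using assms(2) unfolding steep_quotient_def
      by (simp add: pderiv_mult algebra_simps power2_eq_square)
    then show "0 \<le> poly (pderiv p * q - p * pderiv q - q\<^sup>2) y" using Dy by simp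
  qed
  then show "(poly q x)\<^sup>2 \<le> poly (pderiv p * q - p * pderiv q) x" by simp
qed

lemma steep_quotient_increasing:
  fixes p q :: "real poly"
  assumes steep: "steep_quotient p q" and "a \<le> b" and nz: "\<And>x. a \<le> x \<Longrightarrow> x \<le> b \<Longrightarrow> poly q x \<noteq> 0"
  shows "b - a \<le> poly p b / poly q b - poly p a / poly q a"
proof -
  define g where "g x = poly p x / poly q x - x" for x
  have der: "DERIV g x :> (poly (pderiv p) x * poly q x - poly (pderiv q) x * poly p x) / (poly q x)\<^sup>2 - 1"
    if "poly q x \<noteq> 0" for x
    unfolding g_def power2_eq_square
    by (intro DERIV_diff DERIV_quotient[simplified] poly_DERIV DERIV_ident that)
  have der_nonneg: "0 \<le> (poly (pderiv p) x * poly q x - poly (pderiv q) x * poly p x) / (poly q x)\<^sup>2 - 1"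
    if "poly q x \<noteq> 0" for x
  proof -
    have "(poly q x)\<^sup>2 \<le> poly (pderiv p) x * poly q x - poly (pderiv q) x * poly p x"
      using steep unfolding steep_quotient_def by (metis poly_diff poly_mult mult.commute)
    then show ?thesis using that by (simp add: le_divide_eq)
  qed
  have "g a \<le> g b"
  proof (rule DERIV_nonneg_imp_increasing_open[OF \<open>a \<le> b\<close>])
    show "\<exists>y. DERIV g x :> y \<and> 0 \<le> y" if "a < x" "x < b" for x
      using that der der_nonneg nz by (meson less_imp_le)
    show "continuous_on {a..b} g"
      using nz by (intro continuous_at_imp_continuous_on ballI DERIV_isCont[OF der]) auto
  qed
  then show ?thesis unfolding g_def by simp
qed

lemma poly_nonzero_left_of:
  fixes q :: "real poly"
  assumes "q \<noteq> 0"
  obtains a where "a < \<mu>" "\<And>y. a \<le> y \<Longrightarrow> y < \<mu> \<Longrightarrow> poly q y \<noteq> 0"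
proof -
  obtain b where "b < \<mu>" "\<And>y. b < y \<Longrightarrow> y < \<mu> \<Longrightarrow> poly q y \<noteq> 0"
    using eventually_poly_nonzero[OF assms, of \<mu>] unfolding eventually_at_split eventually_at_left_field
    by blast
  then show ?thesis by (intro that[of "(b + \<mu>) / 2"]) auto
qed

lemma poly_nonzero_right_of:
  fixes q :: "real poly"
  assumes "q \<noteq> 0"
  obtains a where "\<mu> < a" "\<And>y. \<mu> < y \<Longrightarrow> y \<le> a \<Longrightarrow> poly q y \<noteq> 0"
proof -
  obtain b where "\<mu> < b" "\<And>y. \<mu> < y \<Longrightarrow> y < b \<Longrightarrow> poly q y \<noteq> 0"
    using eventually_poly_nonzero[OF assms, of \<mu>] unfolding eventually_at_split eventually_at_right_field
    by blast
  then show ?thesis by (intro that[of "(b + \<mu>) / 2"]) auto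
qed

lemma filterlim_coprime_quotient_at_infinity:
  fixes p q :: "real poly"
  assumes "coprime p q" "q \<noteq> 0" "poly q \<mu> = 0"
  shows "filterlim (\<lambda>x. poly p x / poly q x) at_infinity (at \<mu>)"
proof (rule filterlim_divide_at_infinity)
  show "poly p \<mu> \<noteq> 0" using coprime_poly_0[OF assms(1)] assms(3) by blast
  show "(poly p \<longlongrightarrow> poly p \<mu>) (at \<mu>)" using poly_isCont by (rule isContD)
  show "filterlim (poly q) (at 0) (at \<mu>)"
    unfolding filterlim_at using eventually_poly_nonzero[OF assms(2)] isContD[OF poly_isCont, of q \<mu>] assms(3)
    by auto
qed

lemma steep_quotient_pole_at_left:
  fixes p q :: "real poly"
  assumes steep: "steep_quotient p q" and "coprime p q" "q \<noteq> 0" "poly q \<mu> = 0"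
  shows "filterlim (\<lambda>x. poly p x / poly q x) at_top (at_left \<mu>)"
proof -
  let ?f = "\<lambda>x. poly p x / poly q x"
  obtain a where a: "a < \<mu>" "\<And>y. a \<le> y \<Longrightarrow> y < \<mu> \<Longrightarrow> poly q y \<noteq> 0"
    using poly_nonzero_left_of[OF \<open>q \<noteq> 0\<close>] by blast
  have inf: "filterlim ?f at_infinity (at_left \<mu>)"
    using filterlim_coprime_quotient_at_infinity[OF assms(2-4)] by (simp add: filterlim_at_split)
  then have "eventually (\<lambda>x. \<bar>?f a\<bar> < \<bar>?f x\<bar>) (at_left \<mu>)"
    by (simp add: filterlim_at_infinity_conv_norm_at_top filterlim_at_top_dense)
  moreover have "eventually (\<lambda>x. ?f a \<le> ?f x) (at_left \<mu>)"
    using eventually_at_left_real[OF a(1)]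
  proof eventually_elim
    case (elim x)
    then show ?case using steep_quotient_increasing[OF steep, of a x] a by auto
  qed
  ultimately have "eventually (\<lambda>x. ?f x > 0) (at_left \<mu>)" by eventually_elim arith
  with inf show ?thesis by (rule filterlim_at_infinity_imp_filterlim_at_top)
qed

lemma steep_quotient_pole_at_right:
  fixes p q :: "real poly"
  assumes steep: "steep_quotient p q" and "coprime p q" "q \<noteq> 0" "poly q \<mu> = 0"
  shows "filterlim (\<lambda>x. poly p x / poly q x) at_bot (at_right \<mu>)"
proof -
  let ?f = "\<lambda>x. poly p x / poly q x"
  obtain a where a: "\<mu> < a" "\<And>y. \<mu> < y \<Longrightarrow> y \<le> a \<Longrightarrow> poly q y \<noteq> 0"
    using poly_nonzero_right_of[OF \<open>q \<noteq> 0\<close>] by blast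
  have inf: "filterlim ?f at_infinity (at_right \<mu>)"
    using filterlim_coprime_quotient_at_infinity[OF assms(2-4)] by (simp add: filterlim_at_split)
  then have "eventually (\<lambda>x. \<bar>?f a\<bar> < \<bar>?f x\<bar>) (at_right \<mu>)"
    by (simp add: filterlim_at_infinity_conv_norm_at_top filterlim_at_top_dense)
  moreover have "eventually (\<lambda>x. ?f x \<le> ?f a) (at_right \<mu>)"
    using eventually_at_right_real[OF a(1)]
  proof eventually_elim
    case (elim x)
    then show ?case using steep_quotient_increasing[OF steep, of x a] a by auto
  qed
  ultimately have "eventually (\<lambda>x. ?f x < 0) (at_right \<mu>)" by eventually_elim arith
  with inf show ?thesis by (rule filterlim_at_infinity_imp_filterlim_at_bot)
qed

lemma steep_quotient_zero_at_left:
  fixes p q :: "real poly"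
  assumes steep: "steep_quotient p q" and cop: "coprime p q" and "q \<noteq> 0" and p0: "poly p \<mu> = 0"
  shows "filterlim (\<lambda>x. - poly q x / poly p x) at_top (at_left \<mu>)"
proof -
  let ?f = "\<lambda>x. poly p x / poly q x"
  have q\<mu>: "poly q \<mu> \<noteq> 0" using coprime_poly_0[OF cop] p0 by blast
  obtain a where a: "a < \<mu>" "\<And>y. a \<le> y \<Longrightarrow> y < \<mu> \<Longrightarrow> poly q y \<noteq> 0"
    using poly_nonzero_left_of[OF \<open>q \<noteq> 0\<close>] by blast
  have "isCont (\<lambda>x. - ?f x) \<mu>" using q\<mu> by (intro continuous_intros) auto
  then have "((\<lambda>x. - ?f x) \<longlongrightarrow> 0) (at \<mu>)"
    using p0 by (simp add: isCont_def)
  then have "((\<lambda>x. - ?f x) \<longlongrightarrow> 0) (at_left \<mu>)"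
    by (simp add: filterlim_at_split)
  moreover have "eventually (\<lambda>x. 0 < - ?f x) (at_left \<mu>)"
    using eventually_at_left_real[OF a(1)]
  proof eventually_elim
    case (elim x)
    have "poly q y \<noteq> 0" if "x \<le> y" "y \<le> \<mu>" for y
      using a(2)[of y] q\<mu> elim that by (cases "y = \<mu>") auto
    then have "\<mu> - x \<le> ?f \<mu> - ?f x"
      using elim by (intro steep_quotient_increasing[OF steep]) auto
    then show ?case using elim p0 by simp
  qed
  ultimately have "filterlim (\<lambda>x. inverse (- ?f x)) at_top (at_left \<mu>)"
    by (rule filterlim_inverse_at_top)
  then show ?thesis by (simp add: inverse_eq_divide)
qed

(* To the right of the largest root of q, p/q rises from -infinity with slope at least 1. *)
lemma steep_quotient_zero_above_pole:
  fixes p q :: "real poly"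
  assumes steep: "steep_quotient p q" and cop: "coprime p q" and "q \<noteq> 0" and "poly q \<mu> = 0"
  shows "\<exists>z>\<mu>. poly p z = 0"
proof -
  let ?f = "\<lambda>x. poly p x / poly q x"
  define m where "m = Max {x. poly q x = 0}"
  have roots: "finite {x. poly q x = 0}" using poly_roots_finite[OF \<open>q \<noteq> 0\<close>] .
  have "poly q m = 0" "\<mu> \<le> m"
    using Max_in[OF roots] Max_ge[OF roots] \<open>poly q \<mu> = 0\<close> unfolding m_def by auto
  have above: "poly q x \<noteq> 0" if "m < x" for x
    using Max_ge[OF roots, of x] that unfolding m_def by auto
  have "filterlim ?f at_bot (at_right m)"
    by (rule steep_quotient_pole_at_right[OF steep cop \<open>q \<noteq> 0\<close> \<open>poly q m = 0\<close>])
  then have "eventually (\<lambda>x. ?f x \<le> -1 \<and> m < x) (at_right m)"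
    unfolding filterlim_at_bot by (intro eventually_conj eventually_at_right_less) blast
  then obtain a where a: "?f a \<le> -1" "m < a"
    using eventually_happens[of _ "at_right m"] by auto
  define b where "b = a - ?f a"
  have "a \<le> b" "b - a \<le> ?f b - ?f a"
    using steep_quotient_increasing[OF steep, of a "a - ?f a"] a above unfolding b_def by auto
  then obtain z where z: "a \<le> z" "z \<le> b" "?f z = 0"
    using IVT[of ?f a 0 b] a above by (auto intro!: continuous_intros simp: b_def)
  then show ?thesis using above[of z] a \<open>\<mu> \<le> m\<close> by (intro exI[of _ z]) auto
qed

lemma rat_pole_if_filterlim_at_top_at_left:
  fixes P Q :: "real poly"
  assumes "Q \<noteq> 0" and lim: "filterlim (\<lambda>x. poly P x / poly Q x) at_top (at_left \<mu>)"
  shows "rat_pole P Q \<mu>"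
proof -
  have no_limit: False if "((\<lambda>x. poly P x / poly Q x) \<longlongrightarrow> c) (at_left \<mu>)" for c
    using not_tendsto_and_filterlim_at_infinity[OF _ that filterlim_at_top_imp_at_infinity[OF lim]]
    by simp
  then have "P \<noteq> 0" by force
  then obtain D p q where PQ: "P = D * p" "Q = D * q" "D \<noteq> 0" "p \<noteq> 0" "q \<noteq> 0" "coprime p q"
    using common_factor_coprimeE \<open>Q \<noteq> 0\<close> by blast
  have "poly q \<mu> = 0"
  proof (rule ccontr)
    assume "poly q \<mu> \<noteq> 0"
    then have "isCont (\<lambda>x. poly p x / poly q x) \<mu>" by (intro continuous_intros) auto
    then have "((\<lambda>x. poly p x / poly q x) \<longlongrightarrow> poly p \<mu> / poly q \<mu>) (at_left \<mu>)"
      by (simp add: isCont_def filterlim_at_split)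
    moreover have "eventually (\<lambda>x. poly p x / poly q x = poly P x / poly Q x) (at_left \<mu>)"
      using eventually_poly_nonzero[OF \<open>D \<noteq> 0\<close>, of \<mu>] unfolding eventually_at_split
      by (auto elim!: eventually_mono simp: PQ)
    ultimately have "((\<lambda>x. poly P x / poly Q x) \<longlongrightarrow> poly p \<mu> / poly q \<mu>) (at_left \<mu>)"
      by (rule Lim_transform_eventually)
    then show False by (rule no_limit)
  qed
  then show ?thesis using rat_pole_common_factor_iff PQ by simp
qed

lemma filterlim_at_top_add_at_left:
  fixes f g :: "real \<Rightarrow> real"
  assumes "filterlim f at_top (at_left \<mu>) \<or> isCont f \<mu>" "filterlim g at_top (at_left \<mu>) \<or> isCont g \<mu>"
    and "filterlim f at_top (at_left \<mu>) \<or> filterlim g at_top (at_left \<mu>)"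
  shows "filterlim (\<lambda>x. f x + g x) at_top (at_left \<mu>)"
proof -
  have "(h \<longlongrightarrow> h \<mu>) (at_left \<mu>)" if "isCont h \<mu>" for h :: "real \<Rightarrow> real"
    using that by (simp add: isCont_def filterlim_at_split)
  then show ?thesis
    using assms filterlim_at_top_add_at_top filterlim_tendsto_add_at_top[of f "f \<mu>" _ g]
      filterlim_tendsto_add_at_top[of g "g \<mu>" _ f]
    by (auto simp: add.commute)
qed

(* The quotient is P1/Q1 - Q2/P2; in lowest terms, the first summand tends to +infinity from the
   left at a pole of P1/Q1 and the second one at a zero of P2/Q2. *)
lemma rat_pole_bridge_quotient:
  fixes P1 Q1 P2 Q2 :: "real poly"
  assumes nz: "P1 \<noteq> 0" "Q1 \<noteq> 0" "P2 \<noteq> 0" "Q2 \<noteq> 0"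
    and steep: "steep_quotient P1 Q1" "steep_quotient P2 Q2"
    and pole_or_zero: "rat_pole P1 Q1 \<mu> \<or> rat_pole Q2 P2 \<mu>"
  shows "rat_pole (P1 * P2 - Q1 * Q2) (Q1 * P2) \<mu>"
proof -
  obtain D1 p1 q1 where 1: "P1 = D1 * p1" "Q1 = D1 * q1" "D1 \<noteq> 0" "p1 \<noteq> 0" "q1 \<noteq> 0" "coprime p1 q1"
    using common_factor_coprimeE nz(1,2) by blast
  obtain D2 p2 q2 where 2: "P2 = D2 * p2" "Q2 = D2 * q2" "D2 \<noteq> 0" "p2 \<noteq> 0" "q2 \<noteq> 0" "coprime p2 q2"
    using common_factor_coprimeE nz(3,4) by blast
  have steep1: "steep_quotient p1 q1"
    using steep_quotient_cancel_common_factor[of D1 p1 q1] 1 steep(1) by simp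
  have steep2: "steep_quotient p2 q2"
    using steep_quotient_cancel_common_factor[of D2 p2 q2] 2 steep(2) by simp
  define f where "f x = poly p1 x / poly q1 x" for x
  define g where "g x = - poly q2 x / poly p2 x" for x
  have "filterlim f at_top (at_left \<mu>) \<or> isCont f \<mu>"
    using steep_quotient_pole_at_left[OF steep1 1(6,5)] unfolding f_def
    by (cases "poly q1 \<mu> = 0") (auto intro!: continuous_intros)
  moreover have "filterlim g at_top (at_left \<mu>) \<or> isCont g \<mu>"
    using steep_quotient_zero_at_left[OF steep2 2(6,5)] unfolding g_def
    by (cases "poly p2 \<mu> = 0") (auto intro!: continuous_intros)
  moreover have "filterlim f at_top (at_left \<mu>) \<or> filterlim g at_top (at_left \<mu>)"
    using pole_or_zero 1 2 rat_pole_common_factor_iff[of D1 p1 q1] rat_pole_common_factor_iff[of D2 q2 p2]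
      steep_quotient_pole_at_left[OF steep1 1(6,5)] steep_quotient_zero_at_left[OF steep2 2(6,5)]
    unfolding f_def g_def by (auto simp: coprime_commute)
  ultimately have lim: "filterlim (\<lambda>x. f x + g x) at_top (at_left \<mu>)"
    by (rule filterlim_at_top_add_at_left)
  have "eventually (\<lambda>x. poly (D1 * D2 * q1 * p2) x \<noteq> 0) (at_left \<mu>)"
    using eventually_poly_nonzero[of "D1 * D2 * q1 * p2" \<mu>] 1 2 by (simp add: eventually_at_split)
  then have "eventually (\<lambda>x. f x + g x = poly (P1 * P2 - Q1 * Q2) x / poly (Q1 * P2) x) (at_left \<mu>)"
    by eventually_elim (simp add: f_def g_def 1 2 field_simps)
  then have "filterlim (\<lambda>x. poly (P1 * P2 - Q1 * Q2) x / poly (Q1 * P2) x) at_top (at_left \<mu>)"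
    using lim by (simp add: filterlim_cong[OF refl refl])
  then show ?thesis
    using nz by (intro rat_pole_if_filterlim_at_top_at_left) simp_all
qed

lemma steep_quotient_zero_above_rat_pole:
  fixes P Q :: "real poly"
  assumes "P \<noteq> 0" "Q \<noteq> 0" "steep_quotient P Q" "rat_pole P Q \<mu>"
  shows "\<exists>z>\<mu>. rat_pole Q P z"
proof -
  obtain D p q where PQ: "P = D * p" "Q = D * q" "D \<noteq> 0" "p \<noteq> 0" "q \<noteq> 0" "coprime p q"
    using common_factor_coprimeE assms(1,2) by blast
  then have "steep_quotient p q" "poly q \<mu> = 0"
    using assms(3,4) steep_quotient_cancel_common_factor[of D p q] rat_pole_common_factor_iff[of D p q] by simp_all
  then obtain z where "z > \<mu>" "poly p z = 0"
    using steep_quotient_zero_above_pole PQ by blast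
  then show ?thesis
    using PQ rat_pole_common_factor_iff[of D q p] by (auto simp: coprime_commute)
qed

section \<open>Resolvents of symmetric matrices\<close>

lemma isCont_det:
  fixes F :: "real \<Rightarrow> real mat"
  assumes "\<And>y. F y \<in> carrier_mat m m" and "\<And>i j. i < m \<Longrightarrow> j < m \<Longrightarrow> isCont (\<lambda>y. F y $$ (i,j)) x"
  shows "isCont (\<lambda>y. det (F y)) x"
proof -
  have "(\<lambda>y. det (F y)) = (\<lambda>y. \<Sum>p | p permutes {0..<m}. signof p * (\<Prod>i=0..<m. F y $$ (i, p i)))"
    using det_def'[OF assms(1)] by (intro ext) simp
  then show ?thesis
    using assms(2) by (auto intro!: continuous_intros simp: permutes_in_image)
qed

definition char_mat_at :: "real mat \<Rightarrow> nat \<Rightarrow> real \<Rightarrow> real mat" where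
  "char_mat_at A n y = mat n n (\<lambda>(i,j). (if i = j then y else 0) - A $$ (i,j))"

lemma char_mat_at_carrier [simp]: "char_mat_at A n y \<in> carrier_mat n n"
  unfolding char_mat_at_def by simp

lemma char_mat_at_dim [simp]: "dim_row (char_mat_at A n y) = n" "dim_col (char_mat_at A n y) = n"
  unfolding char_mat_at_def by simp_all

lemma char_mat_at_index [simp]:
  "i < n \<Longrightarrow> j < n \<Longrightarrow> char_mat_at A n y $$ (i,j) = (if i = j then y else 0) - A $$ (i,j)"
  unfolding char_mat_at_def by simp

lemma isCont_diag_entry: "isCont (\<lambda>y. (if i = j then y else 0) - (c::real)) x"
  by (cases "i = j") simp_all

lemma isCont_det_char_mat_at: "isCont (\<lambda>y. det (char_mat_at A n y)) x"
  by (rule isCont_det[where m = n]) (simp_all add: isCont_diag_entry)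

lemma isCont_cofactor_char_mat_at:
  assumes "k < n" "i < n"
  shows "isCont (\<lambda>y. cofactor (char_mat_at A n y) k i) x"
proof -
  have "isCont (\<lambda>y. det (mat_delete (char_mat_at A n y) k i)) x"
  proof (rule isCont_det[where m = "n - 1"])
    show "mat_delete (char_mat_at A n y) k i \<in> carrier_mat (n - 1) (n - 1)" for y
      by (rule mat_delete_carrier) simp
    fix a b assume "a < n - 1" "b < n - 1"
    then show "isCont (\<lambda>y. mat_delete (char_mat_at A n y) k i $$ (a, b)) x"
      using assms by (simp add: mat_delete_def isCont_diag_entry)
  qed
  then show ?thesis unfolding cofactor_def by (intro continuous_intros)
qed

lemma sum_mult_cofactor_div_det:
  fixes N :: "real mat"
  assumes N: "N \<in> carrier_mat n n" and "det N \<noteq> 0" "i < n" "k < n"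
  shows "(\<Sum>j<n. N $$ (i,j) * (cofactor N k j / det N)) = (if i = k then 1 else 0)"
proof -
  have "(N * adj_mat N) $$ (i, k) = (det N \<cdot>\<^sub>m 1\<^sub>m n) $$ (i, k)"
    using adj_mat(2)[OF N] by simp
  moreover have "(N * adj_mat N) $$ (i, k) = (\<Sum>j<n. N $$ (i,j) * cofactor N k j)"
    using assms N unfolding adj_mat_def by (simp add: scalar_prod_def atLeast0LessThan)
  ultimately have "(\<Sum>j<n. N $$ (i,j) * cofactor N k j) = det N * (if i = k then 1 else 0)"
    using assms by simp
  then show ?thesis using assms(2) by (simp add: sum_divide_distrib[symmetric])
qed

(* Entry (i, k) of the resolvent (z I - A)^-1. *)
definition resolvent_entry :: "real mat \<Rightarrow> nat \<Rightarrow> nat \<Rightarrow> real \<Rightarrow> nat \<Rightarrow> real" where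
  "resolvent_entry A n k z i = cofactor (char_mat_at A n z) k i / det (char_mat_at A n z)"

lemma isCont_resolvent_entry:
  assumes "k < n" "i < n" "det (char_mat_at A n x) \<noteq> 0"
  shows "isCont (\<lambda>z. resolvent_entry A n k z i) x"
  unfolding resolvent_entry_def
  using assms isCont_cofactor_char_mat_at isCont_det_char_mat_at by (intro continuous_intros) auto

lemma char_mat_at_mult_resolvent_entry:
  assumes "det (char_mat_at A n z) \<noteq> 0" "i < n" "k < n"
  shows "(\<Sum>j<n. char_mat_at A n z $$ (i,j) * resolvent_entry A n k z j) = (if i = k then 1 else 0)"
  unfolding resolvent_entry_def by (rule sum_mult_cofactor_div_det[OF _ assms]) simp

lemma resolvent_identity:
  assumes sym: "\<And>i j. i < n \<Longrightarrow> j < n \<Longrightarrow> A $$ (i,j) = A $$ (j,i)" and k: "k < n"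
    and dx: "det (char_mat_at A n x) \<noteq> 0" and dy: "det (char_mat_at A n y) \<noteq> 0"
  shows "resolvent_entry A n k y k - resolvent_entry A n k x k
    = (x - y) * (\<Sum>i<n. resolvent_entry A n k x i * resolvent_entry A n k y i)"
proof -
  let ?N = "char_mat_at A n" and ?R = "resolvent_entry A n k"
  have Nsym: "?N z $$ (j,i) = ?N z $$ (i,j)" if "i < n" "j < n" for z i j
    using that sym by simp
  have "?R y k = (\<Sum>i<n. if i = k then ?R y i else 0)"
    using k by simp
  also have "\<dots> = (\<Sum>i<n. (\<Sum>j<n. ?N x $$ (i,j) * ?R x j) * ?R y i)"
    by (intro sum.cong refl) (simp add: char_mat_at_mult_resolvent_entry[OF dx _ k] del: char_mat_at_index)
  also have "\<dots> = (\<Sum>i<n. \<Sum>j<n. ?N x $$ (i,j) * ?R x j * ?R y i)"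
    by (simp add: sum_distrib_right)
  finally have Ry: "?R y k = (\<Sum>i<n. \<Sum>j<n. ?N x $$ (i,j) * ?R x j * ?R y i)" .
  have "?R x k = (\<Sum>j<n. if j = k then ?R x j else 0)"
    using k by simp
  also have "\<dots> = (\<Sum>j<n. (\<Sum>i<n. ?N y $$ (j,i) * ?R y i) * ?R x j)"
    by (intro sum.cong refl) (simp add: char_mat_at_mult_resolvent_entry[OF dy _ k] del: char_mat_at_index)
  also have "\<dots> = (\<Sum>j<n. \<Sum>i<n. ?N y $$ (i,j) * ?R x j * ?R y i)"
    unfolding sum_distrib_right
    by (intro sum.cong refl) (simp add: Nsym mult_ac del: char_mat_at_index)
  also have "\<dots> = (\<Sum>i<n. \<Sum>j<n. ?N y $$ (i,j) * ?R x j * ?R y i)"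
    by (rule sum.swap)
  finally have Rx: "?R x k = (\<Sum>i<n. \<Sum>j<n. ?N y $$ (i,j) * ?R x j * ?R y i)" .
  have "?R y k - ?R x k = (\<Sum>i<n. \<Sum>j<n. (?N x $$ (i,j) - ?N y $$ (i,j)) * ?R x j * ?R y i)"
    unfolding Ry Rx by (simp add: sum_subtractf algebra_simps)
  also have "\<dots> = (\<Sum>i<n. (x - y) * (?R x i * ?R y i))"
  proof (intro sum.cong refl)
    fix i assume i: "i \<in> {..<n}"
    have "(\<Sum>j<n. (?N x $$ (i,j) - ?N y $$ (i,j)) * ?R x j * ?R y i)
        = (\<Sum>j<n. if j = i then (x - y) * (?R x j * ?R y i) else 0)"
      by (intro sum.cong refl) (use i in auto)
    then show "(\<Sum>j<n. (?N x $$ (i,j) - ?N y $$ (i,j)) * ?R x j * ?R y i) = (x - y) * (?R x i * ?R y i)"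
      using i by simp
  qed
  finally show ?thesis by (simp add: sum_distrib_left)
qed

lemma resolvent_diag_has_derivative:
  assumes sym: "\<And>i j. i < n \<Longrightarrow> j < n \<Longrightarrow> A $$ (i,j) = A $$ (j,i)" and k: "k < n"
    and dx: "det (char_mat_at A n x) \<noteq> 0"
  shows "((\<lambda>z. resolvent_entry A n k z k) has_field_derivative
          - (\<Sum>i<n. (resolvent_entry A n k x i)\<^sup>2)) (at x)"
proof -
  let ?R = "resolvent_entry A n k"
  have "eventually (\<lambda>y. det (char_mat_at A n y) \<noteq> 0) (at x)"
    using isCont_det_char_mat_at[unfolded isCont_def] dx by (rule tendsto_imp_eventually_ne)
  then have "eventually (\<lambda>y. - (\<Sum>i<n. ?R x i * ?R y i) = (?R y k - ?R x k) / (y - x)) (at x)"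
    using eventually_neq_at_within[of x x UNIV]
  proof eventually_elim
    case (elim y)
    then show ?case using resolvent_identity[OF sym k dx elim(1)] by (simp add: field_simps)
  qed
  moreover have "((\<lambda>y. - (\<Sum>i<n. ?R x i * ?R y i)) \<longlongrightarrow> - (\<Sum>i<n. ?R x i * ?R x i)) (at x)"
    using isCont_resolvent_entry[OF k _ dx] unfolding isCont_def by (intro tendsto_intros) auto
  ultimately have "((\<lambda>y. (?R y k - ?R x k) / (y - x)) \<longlongrightarrow> - (\<Sum>i<n. (?R x i)\<^sup>2)) (at x)"
    by (simp add: Lim_transform_eventually power2_eq_square)
  then show ?thesis unfolding has_field_derivative_iff .
qed

lemma poly_char_poly_eq_det_char_mat_at:
  assumes "A \<in> carrier_mat n n"
  shows "poly (char_poly A) y = det (char_mat_at A n y)"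
proof -
  have "- char_matrix A y = char_mat_at A n y"
    by (rule eq_matI) (use assms in \<open>auto simp: char_matrix_def\<close>)
  then show ?thesis unfolding char_poly_matrix[OF assms] by simp
qed

lemma poly_char_poly_delete_eq_det_char_mat_at:
  assumes "A \<in> carrier_mat n n" "k < n"
  shows "poly (char_poly (mat_delete A k k)) y = det (mat_delete (char_mat_at A n y) k k)"
proof -
  have "- char_matrix (mat_delete A k k) y = mat_delete (char_mat_at A n y) k k"
    by (rule eq_matI) (use assms in \<open>auto simp: char_matrix_def mat_delete_def\<close>)
  then show ?thesis unfolding char_poly_matrix[OF mat_delete_carrier[OF assms(1)]] by simp
qed

(* Q/P is the resolvent entry R_kk, whose derivative - sum_i R_ik^2 is at most - R_kk^2. *)
lemma steep_quotient_char_poly_delete: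
  fixes A :: "real mat"
  assumes A: "A \<in> carrier_mat n n" and sym: "\<And>i j. i < n \<Longrightarrow> j < n \<Longrightarrow> A $$ (i,j) = A $$ (j,i)"
    and k: "k < n"
  shows "steep_quotient (char_poly A) (char_poly (mat_delete A k k))"
proof -
  define P where "P = char_poly A"
  define Q where "Q = char_poly (mat_delete A k k)"
  note P_eval = poly_char_poly_eq_det_char_mat_at[OF A, folded P_def]
  note Q_eval = poly_char_poly_delete_eq_det_char_mat_at[OF A k, folded Q_def]
  have quotient: "poly Q y / poly P y = resolvent_entry A n k y k" for y
    unfolding P_eval Q_eval resolvent_entry_def cofactor_def by (simp flip: mult_2)
  have "P \<noteq> 0" using degree_monic_char_poly[OF A] unfolding P_def by auto
  moreover have "(poly Q y)\<^sup>2 \<le> poly (pderiv P * Q - P * pderiv Q) y" if Py: "poly P y \<noteq> 0" for y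
  proof -
    let ?S = "\<Sum>i<n. (resolvent_entry A n k y i)\<^sup>2"
    have "((\<lambda>z. poly Q z / poly P z) has_field_derivative
        (poly (pderiv Q) y * poly P y - poly (pderiv P) y * poly Q y) / (poly P y ^ 2)) (at y)"
      using DERIV_quotient[OF poly_DERIV[of Q] poly_DERIV Py] by (simp add: power2_eq_square)
    moreover have "((\<lambda>z. poly Q z / poly P z) has_field_derivative - ?S) (at y)"
      unfolding quotient using resolvent_diag_has_derivative[OF sym k] Py P_eval by simp
    ultimately have "(poly (pderiv Q) y * poly P y - poly (pderiv P) y * poly Q y) / (poly P y ^ 2) = - ?S"
      by (rule DERIV_unique)
    then have wronskian: "poly (pderiv P * Q - P * pderiv Q) y = ?S * (poly P y)\<^sup>2"
      using Py by (simp add: field_simps)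
    have "(poly Q y)\<^sup>2 = (resolvent_entry A n k y k)\<^sup>2 * (poly P y)\<^sup>2"
      using Py by (simp flip: quotient add: field_simps)
    also have "\<dots> \<le> ?S * (poly P y)\<^sup>2"
      using k by (intro mult_right_mono member_le_sum) auto
    finally show ?thesis unfolding wronskian .
  qed
  ultimately show ?thesis
    unfolding steep_quotient_def P_def[symmetric] Q_def[symmetric]
    using poly_nonneg_if_nonneg_off_roots[of P "pderiv P * Q - P * pderiv Q - Q\<^sup>2"] by simp
qed

section \<open>Characteristic polynomials of graphs\<close>

definition char_entry :: "('a \<Rightarrow> 'a \<Rightarrow> bool) \<Rightarrow> 'a \<Rightarrow> 'a \<Rightarrow> real poly" where
  "char_entry E u w = (if w = u then [:0, 1:] else 0) - [:adj E u w:]"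

lemma charpoly_eq_det_on: "charpoly V E = det_on V (char_entry E)"
  unfolding charpoly_def det_on_def char_entry_def by simp

lemma charpoly_cong:
  assumes "\<And>u w. u \<in> V \<Longrightarrow> w \<in> V \<Longrightarrow> E u w = E' u w"
  shows "charpoly V E = charpoly V E'"
  unfolding charpoly_eq_det_on using assms by (intro det_on_cong) (simp add: char_entry_def adj_def)

lemma charpoly_eq_char_poly:
  assumes g: "bij_betw g {0..<m} V"
  shows "charpoly V E = char_poly (mat m m (\<lambda>(i,j). adj E (g i) (g j)))"
proof -
  have inj: "inj_on g {0..<m}" using g by (simp add: bij_betw_def)
  have "mat m m (\<lambda>(i,j). char_entry E (g i) (g j)) = char_poly_matrix (mat m m (\<lambda>(i,j). adj E (g i) (g j)))"
    using inj by (intro eq_matI) (auto simp: char_poly_matrix_def char_entry_def inj_on_eq_iff)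
  then show ?thesis
    unfolding charpoly_eq_det_on det_on_eq_det[OF g] char_poly_def by simp
qed

lemma charpoly_nonzero:
  assumes "finite V"
  shows "charpoly V E \<noteq> 0"
proof -
  obtain g where g: "bij_betw g {0..<card V} V" using ex_bij_betw_nat_finite[OF assms] by blast
  show ?thesis
    unfolding charpoly_eq_char_poly[OF g]
    using degree_monic_char_poly[of "mat (card V) (card V) (\<lambda>(i,j). adj E (g i) (g j))" "card V"]
    by auto
qed

lemma steep_quotient_charpoly_delete:
  assumes G: "simple_graph V E" and v: "v \<in> V"
  shows "steep_quotient (charpoly V E) (charpoly (V - {v}) E)"
proof -
  have "finite V" using G by (simp add: simple_graph_def)
  then obtain g where g: "bij_betw g {0..<card V} V" using ex_bij_betw_nat_finite by blast
  define m where "m = card V"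
  define k where "k = inv_into {0..<m} g v"
  have "v \<in> g ` {0..<m}" using g v by (simp add: bij_betw_def m_def)
  then have k: "k < m" "g k = v" unfolding k_def
    using inv_into_into[of v g "{0..<m}"] f_inv_into_f[of v g] by auto
  define A where "A = mat m m (\<lambda>(i,j). adj E (g i) (g j))"
  have sym: "A $$ (i,j) = A $$ (j,i)" if "i < m" "j < m" for i j
    using that G unfolding A_def adj_def simple_graph_def by auto
  define skip where "skip i = (if i < k then i else Suc i)" for i
  have "bij_betw skip {0..<m - 1} ({0..<m} - {k})"
  proof (rule bij_betwI[where g = "\<lambda>j. if j < k then j else j - 1"])
    show "skip \<in> {0..<m - 1} \<rightarrow> {0..<m} - {k}" using k unfolding skip_def by (auto split: if_splits)
    show "(\<lambda>j. if j < k then j else j - 1) \<in> {0..<m} - {k} \<rightarrow> {0..<m - 1}" using k by (auto split: if_splits)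
    show "(if skip i < k then skip i else skip i - 1) = i" for i unfolding skip_def by auto
    show "skip (if j < k then j else j - 1) = j" if "j \<in> {0..<m} - {k}" for j
      using that unfolding skip_def by auto
  qed
  moreover have "bij_betw g ({0..<m} - {k}) (V - {v})"
    using g k by (intro bij_betw_DiffI) (auto simp: bij_betw_def m_def)
  ultimately have "bij_betw (g \<circ> skip) {0..<m - 1} (V - {v})" by (rule bij_betw_trans)
  then have "charpoly (V - {v}) E = char_poly (mat (m - 1) (m - 1) (\<lambda>(i,j). adj E (g (skip i)) (g (skip j))))"
    by (simp add: charpoly_eq_char_poly)
  also have "mat (m - 1) (m - 1) (\<lambda>(i,j). adj E (g (skip i)) (g (skip j))) = mat_delete A k k"
    by (rule eq_matI) (auto simp: mat_delete_def A_def skip_def)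
  finally show ?thesis
    using steep_quotient_char_poly_delete[of A m, OF _ sym k(1)] g
    by (simp add: charpoly_eq_char_poly A_def m_def)
qed

definition alpha_zero :: "'a set \<Rightarrow> ('a \<Rightarrow> 'a \<Rightarrow> bool) \<Rightarrow> 'a \<Rightarrow> real \<Rightarrow> bool" where
  "alpha_zero V E i \<mu> \<longleftrightarrow> rat_pole (charpoly (V - {i}) E) (charpoly V E) \<mu>"

lemma alpha_zero_above_pole:
  assumes "simple_graph V E" "v \<in> V" "alpha_pole V E v \<mu>"
  shows "\<exists>z>\<mu>. alpha_zero V E v z"
proof -
  have "finite V" using assms(1) by (simp add: simple_graph_def)
  then show ?thesis
    using steep_quotient_zero_above_rat_pole[OF charpoly_nonzero charpoly_nonzero
        steep_quotient_charpoly_delete[OF assms(1,2)]] assms(3)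
    unfolding alpha_pole_def alpha_zero_def by simp
qed

definition bridge :: "('a \<Rightarrow> 'a \<Rightarrow> bool) \<Rightarrow> ('a \<Rightarrow> 'a \<Rightarrow> bool) \<Rightarrow> 'a \<Rightarrow> 'a \<Rightarrow> 'a \<Rightarrow> 'a \<Rightarrow> bool" where
  "bridge E1 E2 a b u w \<longleftrightarrow> E1 u w \<or> E2 u w \<or> (u = a \<and> w = b) \<or> (u = b \<and> w = a)"

locale bridged_graphs =
  fixes V1 V2 :: "'a set" and E1 E2 :: "'a \<Rightarrow> 'a \<Rightarrow> bool" and a b :: 'a
  assumes graph1: "simple_graph V1 E1" and graph2: "simple_graph V2 E2"
    and disjoint: "V1 \<inter> V2 = {}" and a_in: "a \<in> V1" and b_in: "b \<in> V2"
begin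

lemma finite_parts: "finite V1" "finite V2"
  using graph1 graph2 by (simp_all add: simple_graph_def)

lemma bridge_on_V1: "u \<in> V1 \<Longrightarrow> w \<in> V1 \<Longrightarrow> bridge E1 E2 a b u w = E1 u w"
  and bridge_on_V2: "u \<in> V2 \<Longrightarrow> w \<in> V2 \<Longrightarrow> bridge E1 E2 a b u w = E2 u w"
  and bridge_V1_V2: "u \<in> V1 \<Longrightarrow> w \<in> V2 \<Longrightarrow> bridge E1 E2 a b u w \<longleftrightarrow> u = a \<and> w = b"
  and bridge_V2_V1: "u \<in> V2 \<Longrightarrow> w \<in> V1 \<Longrightarrow> bridge E1 E2 a b u w \<longleftrightarrow> u = b \<and> w = a"
  using graph1 graph2 disjoint a_in b_in unfolding bridge_def simple_graph_def by blast+

lemma simple_graph_bridge: "simple_graph (V1 \<union> V2) (bridge E1 E2 a b)"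
  using graph1 graph2 disjoint a_in b_in unfolding bridge_def simple_graph_def by blast

lemma charpoly_bridge_on_V1: "S \<subseteq> V1 \<Longrightarrow> charpoly S (bridge E1 E2 a b) = charpoly S E1"
  using bridge_on_V1 by (intro charpoly_cong) auto

lemma charpoly_bridge_on_V2: "S \<subseteq> V2 \<Longrightarrow> charpoly S (bridge E1 E2 a b) = charpoly S E2"
  using bridge_on_V2 by (intro charpoly_cong) auto

lemma charpoly_bridge:
  "charpoly (V1 \<union> V2) (bridge E1 E2 a b)
     = charpoly V1 E1 * charpoly V2 E2 - charpoly (V1 - {a}) E1 * charpoly (V2 - {b}) E2"
proof -
  let ?M = "char_entry (bridge E1 E2 a b)"
  have "det_on (V1 \<union> V2) ?M
      = det_on V1 ?M * det_on V2 ?M - ?M a b * ?M b a * det_on (V1 - {a}) ?M * det_on (V2 - {b}) ?M"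
  proof (rule det_on_bridge[OF finite_parts disjoint a_in b_in])
    show "?M u w = 0" if "u \<in> V1" "w \<in> V2" "(u, w) \<noteq> (a, b)" for u w
      using that bridge_V1_V2 disjoint by (auto simp: char_entry_def adj_def)
    show "?M u w = 0" if "u \<in> V2" "w \<in> V1" "(u, w) \<noteq> (b, a)" for u w
      using that bridge_V2_V1 disjoint by (auto simp: char_entry_def adj_def)
  qed
  moreover have "?M a b * ?M b a = 1"
    using a_in b_in disjoint by (auto simp: char_entry_def adj_def bridge_def)
  ultimately have "charpoly (V1 \<union> V2) (bridge E1 E2 a b) = charpoly V1 (bridge E1 E2 a b) * charpoly V2 (bridge E1 E2 a b)
      - charpoly (V1 - {a}) (bridge E1 E2 a b) * charpoly (V2 - {b}) (bridge E1 E2 a b)"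
    by (simp add: charpoly_eq_det_on mult.assoc)
  then show ?thesis by (simp add: charpoly_bridge_on_V1 charpoly_bridge_on_V2)
qed

lemma charpoly_bridge_delete:
  "charpoly (V1 \<union> V2 - {a}) (bridge E1 E2 a b) = charpoly (V1 - {a}) E1 * charpoly V2 E2"
proof -
  have "V1 \<union> V2 - {a} = (V1 - {a}) \<union> V2" using a_in disjoint by blast
  moreover have "det_on ((V1 - {a}) \<union> V2) (char_entry (bridge E1 E2 a b))
      = det_on (V1 - {a}) (char_entry (bridge E1 E2 a b)) * det_on V2 (char_entry (bridge E1 E2 a b))"
    using finite_parts disjoint bridge_V1_V2
    by (intro det_on_block_triangular) (auto simp: char_entry_def adj_def)
  ultimately have "charpoly (V1 \<union> V2 - {a}) (bridge E1 E2 a b)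
      = charpoly (V1 - {a}) (bridge E1 E2 a b) * charpoly V2 (bridge E1 E2 a b)"
    by (simp add: charpoly_eq_det_on)
  then show ?thesis by (simp add: charpoly_bridge_on_V1 charpoly_bridge_on_V2)
qed


lemma alpha_pole_bridge:
  assumes "alpha_pole V1 E1 a \<mu> \<or> alpha_zero V2 E2 b \<mu>"
  shows "alpha_pole (V1 \<union> V2) (bridge E1 E2 a b) a \<mu>"
  unfolding alpha_pole_def charpoly_bridge charpoly_bridge_delete
  using assms finite_parts a_in b_in unfolding alpha_pole_def alpha_zero_def
  by (intro rat_pole_bridge_quotient charpoly_nonzero steep_quotient_charpoly_delete graph1 graph2) auto
end

section \<open>Decorated paths\<close>

definition disjoint_rooted_graphs ::
    "nat \<Rightarrow> (nat \<Rightarrow> 'a set) \<Rightarrow> (nat \<Rightarrow> 'a \<Rightarrow> 'a \<Rightarrow> bool) \<Rightarrow> (nat \<Rightarrow> 'a) \<Rightarrow> bool" where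
  "disjoint_rooted_graphs n V E r \<longleftrightarrow> (\<forall>i\<in>{1..n}. rooted_graph (V i) (E i) (r i))
     \<and> (\<forall>i\<in>{1..n}. \<forall>j\<in>{1..n}. i \<noteq> j \<longrightarrow> V i \<inter> V j = {})"

lemma bex_atLeastAtMost_Suc: "(\<exists>i\<in>{1..Suc n}. P i) \<longleftrightarrow> P 1 \<or> (\<exists>i\<in>{1..n}. P (Suc i))"
  by (metis One_nat_def Suc_le_mono atLeastAtMost_iff le_add1 nat.exhaust not_one_le_zero plus_1_eq_Suc)

lemma dpath_one: "dpath_V (Suc 0) V = V 1" "dpath_E (Suc 0) E r = E 1"
  by (auto simp: dpath_V_def dpath_E_def fun_eq_iff)

lemma dpath_V_Suc: "dpath_V (Suc n) V = V 1 \<union> dpath_V n (\<lambda>i. V (Suc i))"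
  unfolding dpath_V_def set_eq_iff UN_iff Un_iff bex_atLeastAtMost_Suc by blast

lemma dpath_E_Suc:
  assumes "1 \<le> n"
  shows "dpath_E (Suc n) E r = bridge (E 1) (dpath_E n (\<lambda>i. E (Suc i)) (\<lambda>i. r (Suc i))) (r 1) (r 2)"
proof -
  have "(\<exists>i. 1 \<le> i \<and> i < Suc n \<and> P i) \<longleftrightarrow> P 1 \<or> (\<exists>i. 1 \<le> i \<and> i < n \<and> P (Suc i))" for P
  proof
    assume "\<exists>i. 1 \<le> i \<and> i < Suc n \<and> P i"
    then obtain i where "1 \<le> i" "i < Suc n" "P i" by blast
    then show "P 1 \<or> (\<exists>i. 1 \<le> i \<and> i < n \<and> P (Suc i))"
      by (cases "i = 1") (auto intro!: exI[of _ "i - 1"])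
  qed (use assms in auto)
  then show ?thesis
    unfolding dpath_E_def bridge_def fun_eq_iff bex_atLeastAtMost_Suc by (auto simp: numeral_2_eq_2)
qed

lemma disjoint_rooted_graphs_Suc:
  assumes "disjoint_rooted_graphs (Suc n) V E r"
  shows "rooted_graph (V 1) (E 1) (r 1)"
    and "disjoint_rooted_graphs n (\<lambda>i. V (Suc i)) (\<lambda>i. E (Suc i)) (\<lambda>i. r (Suc i))"
    and "V 1 \<inter> dpath_V n (\<lambda>i. V (Suc i)) = {}"
proof -
  have disj: "V i \<inter> V j = {}" if "i \<in> {1..Suc n}" "j \<in> {1..Suc n}" "i \<noteq> j" for i j
    using assms that unfolding disjoint_rooted_graphs_def by blast
  show "rooted_graph (V 1) (E 1) (r 1)"
    using assms unfolding disjoint_rooted_graphs_def by simp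
  show "disjoint_rooted_graphs n (\<lambda>i. V (Suc i)) (\<lambda>i. E (Suc i)) (\<lambda>i. r (Suc i))"
    using assms disj unfolding disjoint_rooted_graphs_def by simp
  show "V 1 \<inter> dpath_V n (\<lambda>i. V (Suc i)) = {}"
    using disj[of 1 "Suc _"] unfolding dpath_V_def by fastforce
qed

lemma rooted_graph_dpath:
  assumes "1 \<le> n" "disjoint_rooted_graphs n V E r"
  shows "rooted_graph (dpath_V n V) (dpath_E n E r) (r 1)"
  using assms
proof (induction n arbitrary: V E r rule: nat_induct_at_least)
  case base
  then show ?case by (simp add: dpath_one disjoint_rooted_graphs_def)
next
  case (Suc n)
  note parts = disjoint_rooted_graphs_Suc[OF Suc.prems]
  have "rooted_graph (dpath_V n (\<lambda>i. V (Suc i))) (dpath_E n (\<lambda>i. E (Suc i)) (\<lambda>i. r (Suc i))) (r 2)"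
    using Suc.IH[OF parts(2)] by (simp add: numeral_2_eq_2)
  then interpret bridged_graphs "V 1" "dpath_V n (\<lambda>i. V (Suc i))" "E 1"
      "dpath_E n (\<lambda>i. E (Suc i)) (\<lambda>i. r (Suc i))" "r 1" "r 2"
    using parts by unfold_locales (auto simp: rooted_graph_def)
  show ?case
    using simple_graph_bridge a_in Suc.hyps by (simp add: rooted_graph_def dpath_V_Suc dpath_E_Suc)
qed

lemma alpha_pole_dpath_above:
  assumes "disjoint_rooted_graphs n V E r" "i \<in> {1..n}" "alpha_pole (V i) (E i) (r i) lam"
  shows "\<exists>\<mu>\<ge>lam. alpha_pole (dpath_V n V) (dpath_E n E r) (r 1) \<mu>"
  using assms
proof (induction n arbitrary: V E r i)
  case 0
  then show ?case by simp
next
  case (Suc m)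
  show ?case
  proof (cases "m = 0")
    case True
    then show ?thesis using Suc.prems by (auto simp: dpath_one)
  next
    case False
    let ?V = "\<lambda>i. V (Suc i)" and ?E = "\<lambda>i. E (Suc i)" and ?r = "\<lambda>i. r (Suc i)"
    note parts = disjoint_rooted_graphs_Suc[OF Suc.prems(1)]
    have tail: "rooted_graph (dpath_V m ?V) (dpath_E m ?E ?r) (r 2)"
      using rooted_graph_dpath[OF _ parts(2)] False by (simp add: numeral_2_eq_2)
    interpret bridged_graphs "V 1" "dpath_V m ?V" "E 1" "dpath_E m ?E ?r" "r 1" "r 2"
      using parts tail by unfold_locales (auto simp: rooted_graph_def)
    have "alpha_pole (V 1) (E 1) (r 1) lam \<or> (\<exists>\<mu>\<ge>lam. alpha_zero (dpath_V m ?V) (dpath_E m ?E ?r) (r 2) \<mu>)"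
    proof (cases "i = 1")
      case True
      then show ?thesis using Suc.prems(3) by simp
    next
      case False
      then have "i - 1 \<in> {1..m}" "alpha_pole (?V (i - 1)) (?E (i - 1)) (?r (i - 1)) lam"
        using Suc.prems(2,3) by auto
      then obtain \<mu> where \<mu>: "\<mu> \<ge> lam" "alpha_pole (dpath_V m ?V) (dpath_E m ?E ?r) (r 2) \<mu>"
        using Suc.IH[OF parts(2)] by (auto simp: numeral_2_eq_2)
      obtain z where "z > \<mu>" "alpha_zero (dpath_V m ?V) (dpath_E m ?E ?r) (r 2) z"
        using alpha_zero_above_pole[OF graph2 b_in \<mu>(2)] by blast
      then show ?thesis using \<mu>(1) by (intro disjI2 exI[of _ z]) simp
    qed
    then show ?thesis
      using alpha_pole_bridge False by (auto simp: dpath_V_Suc dpath_E_Suc)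
  qed
qed

theorem lemma8:
  fixes n :: nat and V :: "nat \<Rightarrow> 'a set" and E :: "nat \<Rightarrow> 'a \<Rightarrow> 'a \<Rightarrow> bool"
    and r :: "nat \<Rightarrow> 'a" and \<theta> :: real
  assumes "n \<ge> 1"
    and "\<forall>i\<in>{1..n}. rooted_graph (V i) (E i) (r i)"
    and "\<forall>i\<in>{1..n}. \<forall>j\<in>{1..n}. i \<noteq> j \<longrightarrow> V i \<inter> V j = {}"
    and "\<forall>\<mu>. alpha_pole (dpath_V n V) (dpath_E n E r) (r 1) \<mu> \<longrightarrow> \<mu> < \<theta>"
  shows "\<forall>i\<in>{1..n}. \<forall>lam::real. lam \<ge> \<theta> \<longrightarrow> \<not> alpha_pole (V i) (E i) (r i) lam"
proof (intro ballI allI impI notI)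
  fix i lam
  assume "i \<in> {1..n}" "\<theta> \<le> lam" "alpha_pole (V i) (E i) (r i) lam"
  then obtain \<mu> where "lam \<le> \<mu>" "alpha_pole (dpath_V n V) (dpath_E n E r) (r 1) \<mu>"
    using alpha_pole_dpath_above[of n V E r] assms(2,3) unfolding disjoint_rooted_graphs_def by blast
  then show False using assms(4) \<open>\<theta> \<le> lam\<close> by force
qed

end
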